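(* Let $D:\mathbb R^2\setminus\{0\}\to\mathbb R$ be nonnegative, bounded and continuously differentiable, and consider $\ddot x+D(x)\dot x=-x/|x|^3$. Let $x_n:\,]-\infty,0]\to\mathbb R^2\setminus\{0\}$ be a sequence of nonrectilinear solutions, and set $r_n=|x_n|$. Suppose that for some $r_*>0$ we have $r_n(0)=r_*$ for all $n$ and $\dot r_n(0)\to+\infty$. Then for all $n$ large enough: (i) there exists $\mathfrak t_n<0$ with $\dot r_n(\mathfrak t_n)=0$, and moreover these can be chosen with $\lim_{n\to\infty}\mathfrak t_n=0$; (ii) $\dot r_n(t)>0$ for all $t\in\,]\mathfrak t_n,0[$ and $\dot r_n(t)<0$ for all $t<\mathfrak t_n$; (iii) there exists $\tau_n<\mathfrak t_n$ with $r_n(\tau_n)=r_*$; moreover $\lim_{n\to\infty}\tau_n=0$ and $\lim_{n\to\infty}\dot r_n(\tau_n)=-\infty$.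
   Context: A solution is nonrectilinear if its angular momentum $\det(x,\dot x)$ is not identically zero; such solutions are defined on all of $]-\infty,0]$ when maximal in the past. *)

theory Defs
  imports "HOL-Analysis.Analysis"
begin

definition det2 :: "real^2 \<Rightarrow> real^2 \<Rightarrow> real" where
  "det2 a b = a$1 * b$2 - a$2 * b$1"

definition C1_punctured :: "(real^2 \<Rightarrow> real) \<Rightarrow> bool" where
  "C1_punctured D \<longleftrightarrow> (\<exists>G :: real^2 \<Rightarrow> real^2.
      (\<forall>y. y \<noteq> 0 \<longrightarrow> (D has_derivative (\<lambda>h. G y \<bullet> h)) (at y)) \<and>
      continuous_on (UNIV - {0}) G)"

definition past_solution ::
  "(real^2 \<Rightarrow> real) \<Rightarrow> (real \<Rightarrow> real^2) \<Rightarrow> (real \<Rightarrow> real^2) \<Rightarrow> bool" where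
  "past_solution D x v \<longleftrightarrow>
     (\<forall>t\<le>0. x t \<noteq> 0 \<and>
        (x has_vector_derivative v t) (at t within {..0}) \<and>
        (v has_vector_derivative
           (- (D (x t) *\<^sub>R v t) - (1 / norm (x t) ^ 3) *\<^sub>R x t)) (at t within {..0}))"

text \<open>Nonrectilinear: angular momentum det(x, x') not identically zero.\<close>
definition nonrectilinear :: "(real \<Rightarrow> real^2) \<Rightarrow> (real \<Rightarrow> real^2) \<Rightarrow> bool" where
  "nonrectilinear x v \<longleftrightarrow> (\<exists>t\<le>0. det2 (x t) (v t) \<noteq> 0)"

end

theory Submission
  imports Defs
begin

(* Write xv = x . v = r r' and vv = |v|^2, so that xv' = vv - D xv - 1/r. Since D >= 0 the energy
  vv/2 - 1/r decreases in time, so in the past it stays above its value at 0, which is at least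
  V^2/4 when V = r'(0) is large; hence xv' > V^2/2 - D xv, and every zero of xv is crossed upwards.
  A Gronwall estimate bounds xv by r* V e^B while it is nonnegative, so backwards in time xv
  decreases at rate at least V^2/4 and vanishes at a unique turning time in [-8 r*/V, 0[. Before
  it, xv' >= V^2/2, so r^2 grows quadratically and r comes back to r* at a unique time in
  [turn - 6 r* e^B/V, turn[. Finally, 2 energy - L^2/r*^2 (L the angular momentum) does not
  increase while r <= r* and equals r'^2 - 2/r* where r = r*, which gives r'(tau) <= -V. *)

section \<open>Calculus with one-sided derivatives\<close>

lemma has_real_derivative_inner:
  fixes f g :: "real \<Rightarrow> 'a::real_inner"
  assumes "(f has_vector_derivative f') (at t within S)"
    and "(g has_vector_derivative g') (at t within S)"
  shows "((\<lambda>s. f s \<bullet> g s) has_real_derivative f' \<bullet> g t + f t \<bullet> g') (at t within S)"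
proof -
  have "((\<lambda>s. f s \<bullet> g s) has_derivative (\<lambda>h. f t \<bullet> (h *\<^sub>R g') + (h *\<^sub>R f') \<bullet> g t))
      (at t within S)"
    using has_derivative_inner assms unfolding has_vector_derivative_def by blast
  moreover have "(\<lambda>h. f t \<bullet> (h *\<^sub>R g') + (h *\<^sub>R f') \<bullet> g t) = (*) (f' \<bullet> g t + f t \<bullet> g')"
    by (auto simp: algebra_simps inner_commute)
  ultimately show ?thesis
    unfolding has_field_derivative_def by simp
qed

lemma has_real_derivative_within_interval_imp_at:
  assumes "{p..q} \<subseteq> S" "t \<in> {p<..<q}" "(f has_real_derivative f') (at t within S)"
  shows "(f has_real_derivative f') (at t)"
proof -
  have "t \<in> interior {p..q}"
    using assms(2) by simp
  then have "t \<in> interior S"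
    using interior_mono[OF assms(1)] by blast
  then have "at t within S = at t"
    by (rule at_within_interior)
  then show ?thesis
    using assms(3) by (simp only:)
qed

lemma has_real_derivative_within_imp_continuous_on:
  assumes "{p..q} \<subseteq> S" "\<And>t. t \<in> {p..q} \<Longrightarrow> (f has_real_derivative f' t) (at t within S)"
  shows "continuous_on {p..q} f"
proof (rule DERIV_continuous_on)
  fix t assume "t \<in> {p..q}"
  show "(f has_real_derivative f' t) (at t within {p..q})"
    using DERIV_subset[OF assms(2)[OF \<open>t \<in> {p..q}\<close>] assms(1)] .
qed

lemma has_real_derivative_nonneg_imp_le:
  fixes f :: "real \<Rightarrow> real"
  assumes "p \<le> q" "{p..q} \<subseteq> S"
    and deriv: "\<And>t. t \<in> {p..q} \<Longrightarrow> (f has_real_derivative f' t) (at t within S)"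
    and nonneg: "\<And>t. t \<in> {p<..<q} \<Longrightarrow> 0 \<le> f' t"
  shows "f p \<le> f q"
proof (rule DERIV_nonneg_imp_increasing_open[OF assms(1)])
  fix t assume "p < t" "t < q"
  then show "\<exists>y. (f has_real_derivative y) (at t) \<and> 0 \<le> y"
    using has_real_derivative_within_interval_imp_at[OF assms(2) _ deriv] nonneg by auto
qed (rule has_real_derivative_within_imp_continuous_on[OF assms(2) deriv])

lemma has_real_derivative_nonpos_imp_ge:
  fixes f :: "real \<Rightarrow> real"
  assumes "p \<le> q" "{p..q} \<subseteq> S"
    and deriv: "\<And>t. t \<in> {p..q} \<Longrightarrow> (f has_real_derivative f' t) (at t within S)"
    and nonpos: "\<And>t. t \<in> {p<..<q} \<Longrightarrow> f' t \<le> 0"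
  shows "f q \<le> f p"
proof (rule DERIV_nonpos_imp_decreasing_open[OF assms(1)])
  fix t assume "p < t" "t < q"
  then show "\<exists>y. (f has_real_derivative y) (at t) \<and> y \<le> 0"
    using has_real_derivative_within_interval_imp_at[OF assms(2) _ deriv] nonpos by auto
qed (rule has_real_derivative_within_imp_continuous_on[OF assms(2) deriv])

lemma has_real_derivative_pos_imp_less:
  fixes f :: "real \<Rightarrow> real"
  assumes "p < q" "{p..q} \<subseteq> S"
    and deriv: "\<And>t. t \<in> {p..q} \<Longrightarrow> (f has_real_derivative f' t) (at t within S)"
    and pos: "\<And>t. t \<in> {p<..<q} \<Longrightarrow> 0 < f' t"
  shows "f p < f q"
proof (rule DERIV_pos_imp_increasing_open[OF assms(1)])
  fix t assume "p < t" "t < q"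
  then show "\<exists>y. (f has_real_derivative y) (at t) \<and> 0 < y"
    using has_real_derivative_within_interval_imp_at[OF assms(2) _ deriv] pos by auto
qed (rule has_real_derivative_within_imp_continuous_on[OF assms(2) deriv])

lemma has_real_derivative_neg_imp_less:
  fixes f :: "real \<Rightarrow> real"
  assumes "p < q" "{p..q} \<subseteq> S"
    and deriv: "\<And>t. t \<in> {p..q} \<Longrightarrow> (f has_real_derivative f' t) (at t within S)"
    and neg: "\<And>t. t \<in> {p<..<q} \<Longrightarrow> f' t < 0"
  shows "f q < f p"
proof (rule DERIV_neg_imp_decreasing_open[OF assms(1)])
  fix t assume "p < t" "t < q"
  then show "\<exists>y. (f has_real_derivative y) (at t) \<and> y < 0"
    using has_real_derivative_within_interval_imp_at[OF assms(2) _ deriv] neg by auto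
qed (rule has_real_derivative_within_imp_continuous_on[OF assms(2) deriv])

lemma zeros_upcrossing_imp_nonneg:
  fixes f f' :: "real \<Rightarrow> real"
  assumes "a \<le> b" "0 \<le> f a"
    and deriv: "\<And>u. u \<in> {a..b} \<Longrightarrow> (f has_real_derivative f' u) (at u)"
    and upcross: "\<And>u. u \<in> {a..b} \<Longrightarrow> f u = 0 \<Longrightarrow> 0 < f' u"
  shows "0 \<le> f b"
proof (rule ccontr)
  assume "\<not> 0 \<le> f b"
  have cont: "continuous_on {c..b} f" if "a \<le> c" for c
  proof (rule DERIV_continuous_on)
    fix u assume "u \<in> {c..b}"
    then show "(f has_real_derivative f' u) (at u within {c..b})"
      using that by (intro has_field_derivative_at_within[OF deriv]) auto
  qed
  \<comment> \<open>Right after the last zero z of f in [a, b], f is positive, so it vanishes again before b.\<close>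
  define Z where "Z = {a..b} \<inter> f -` {0}"
  obtain z0 where "a \<le> z0" "z0 \<le> b" "f z0 = 0"
    using IVT2'[of f b 0 a] cont[of a] assms(1,2) \<open>\<not> 0 \<le> f b\<close> by auto
  then have "Z \<noteq> {}"
    by (auto simp: Z_def)
  moreover have "bdd_above Z"
    by (auto simp: Z_def)
  moreover have "closed Z"
    unfolding Z_def using cont[of a] by (intro continuous_closed_preimage) auto
  ultimately have "Sup Z \<in> Z"
    by (rule closed_contains_Sup)
  define z where "z = Sup Z"
  have z: "a \<le> z" "z \<le> b" "f z = 0"
    using \<open>Sup Z \<in> Z\<close> by (auto simp: Z_def z_def)
  then have "z < b"
    using \<open>\<not> 0 \<le> f b\<close> by (cases "z = b") auto
  have "f' z > 0" "(f has_real_derivative f' z) (at z)"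
    using z by (auto intro: upcross deriv)
  then obtain e where "0 < e" and e: "\<And>k. 0 < k \<Longrightarrow> k < e \<Longrightarrow> f z < f (z + k)"
    using DERIV_pos_inc_right by blast
  obtain k where k: "0 < k" "k < e" "k < b - z"
    using field_lbound_gt_zero[OF \<open>0 < e\<close>, of "b - z"] \<open>z < b\<close> by auto
  have "0 < f (z + k)"
    using e[OF k(1,2)] z(3) by simp
  then obtain w where w: "z + k \<le> w" "w \<le> b" "f w = 0"
    using IVT2'[of f b 0 "z + k"] cont[of "z + k"] \<open>\<not> 0 \<le> f b\<close> z k by auto
  then have "w \<in> Z"
    using z k by (auto simp: Z_def)
  then have "w \<le> z"
    unfolding z_def using \<open>bdd_above Z\<close> by (rule cSup_upper)
  then show False
    using w k by linarith
qed

lemma zeros_upcrossing_imp_pos: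
  fixes f f' :: "real \<Rightarrow> real"
  assumes "s < t" "0 \<le> f s"
    and deriv: "\<And>u. u \<in> {s..t} \<Longrightarrow> (f has_real_derivative f' u) (at u)"
    and upcross: "\<And>u. u \<in> {s..t} \<Longrightarrow> f u = 0 \<Longrightarrow> 0 < f' u"
  shows "0 < f t"
proof -
  have nonneg: "0 \<le> f b" if "s \<le> b" "b \<le> t" for b
    using that assms(2) by (intro zeros_upcrossing_imp_nonneg[of s b f f'] deriv upcross) auto
  have "f t \<noteq> 0"
  proof
    assume "f t = 0"
    then have "f' t > 0" "(f has_real_derivative f' t) (at t)"
      using assms(1) by (auto intro: upcross deriv)
    then obtain e where "0 < e" and e: "\<And>k. 0 < k \<Longrightarrow> k < e \<Longrightarrow> f (t - k) < f t"
      using DERIV_pos_inc_left by blast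
    obtain k where k: "0 < k" "k < e" "k < t - s"
      using field_lbound_gt_zero[OF \<open>0 < e\<close>, of "t - s"] assms(1) by auto
    then show False
      using e[OF k(1,2)] nonneg[of "t - k"] \<open>f t = 0\<close> by simp
  qed
  then show ?thesis
    using nonneg[of t] assms(1) by linarith
qed

section \<open>Damped Kepler motion in the past\<close>

locale damped_kepler_past =
  fixes D :: "real^2 \<Rightarrow> real" and B :: real and x v :: "real \<Rightarrow> real^2"
  assumes D_nonneg: "\<And>y. y \<noteq> 0 \<Longrightarrow> 0 \<le> D y"
    and D_le: "\<And>y. y \<noteq> 0 \<Longrightarrow> D y \<le> B"
    and solution: "past_solution D x v"
begin

definition rad :: "real \<Rightarrow> real" where "rad t = norm (x t)"
definition xv :: "real \<Rightarrow> real" where "xv t = x t \<bullet> v t"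
definition vv :: "real \<Rightarrow> real" where "vv t = v t \<bullet> v t"
definition energy :: "real \<Rightarrow> real" where "energy t = vv t / 2 - 1 / rad t"

(* By Lagrange's identity, ang_sq t is the squared angular momentum det2 (x t) (v t) ^ 2. *)
definition ang_sq :: "real \<Rightarrow> real" where "ang_sq t = rad t ^ 2 * vv t - xv t ^ 2"

lemma x_nonzero: "t \<le> 0 \<Longrightarrow> x t \<noteq> 0"
  using solution by (simp add: past_solution_def)

lemma rad_pos: "t \<le> 0 \<Longrightarrow> 0 < rad t"
  using x_nonzero by (simp add: rad_def)

lemma B_nonneg: "0 \<le> B"
  using D_nonneg[OF x_nonzero] D_le[OF x_nonzero] by (meson order.trans order_refl)

lemma rad_sq: "rad t ^ 2 = x t \<bullet> x t"
  by (simp add: rad_def power2_norm_eq_inner)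

lemma x_deriv: "t \<le> 0 \<Longrightarrow> (x has_vector_derivative v t) (at t within {..0})"
  using solution by (simp add: past_solution_def)

lemma v_deriv:
  "t \<le> 0 \<Longrightarrow>
    (v has_vector_derivative - (D (x t) *\<^sub>R v t) - (1 / rad t ^ 3) *\<^sub>R x t) (at t within {..0})"
  using solution by (simp add: past_solution_def rad_def)

lemma rad_sq_deriv:
  assumes "t \<le> 0"
  shows "((\<lambda>s. rad s ^ 2) has_real_derivative 2 * xv t) (at t within {..0})"
  unfolding rad_sq
  by (rule DERIV_cong[OF has_real_derivative_inner[OF x_deriv[OF assms] x_deriv[OF assms]]])
    (simp add: xv_def inner_commute)

lemma rad_deriv:
  assumes "t \<le> 0"
  shows "(rad has_real_derivative xv t / rad t) (at t within {..0})"
proof -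
  have pos: "0 < x t \<bullet> x t"
    using rad_pos[OF assms] by (simp add: rad_sq[symmetric])
  have rad_eq: "(\<lambda>s. sqrt (x s \<bullet> x s)) = rad"
    by (simp add: rad_def[abs_def] norm_eq_sqrt_inner)
  have "sqrt (x t \<bullet> x t) = rad t"
    by (simp add: rad_def norm_eq_sqrt_inner)
  moreover have "v t \<bullet> x t + x t \<bullet> v t = 2 * xv t"
    by (simp add: xv_def inner_commute)
  ultimately have value_eq:
      "inverse (sqrt (x t \<bullet> x t)) / 2 * (v t \<bullet> x t + x t \<bullet> v t) = xv t / rad t"
    using rad_pos[OF assms] by (simp add: field_simps)
  show ?thesis
    using DERIV_chain2[OF DERIV_real_sqrt[OF pos]
        has_real_derivative_inner[OF x_deriv[OF assms] x_deriv[OF assms]]]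
    unfolding rad_eq value_eq .
qed

lemma radial_velocity_eq:
  assumes "t \<le> 0" and deriv: "((\<lambda>s. norm (x s)) has_real_derivative r') (at t within {..0})"
  shows "r' = xv t / rad t"
proof (rule has_field_derivative_unique)
  show "(rad has_real_derivative r') (at t within {..0})"
    unfolding rad_def[abs_def] by (rule deriv)
  show "(rad has_real_derivative xv t / rad t) (at t within {..0})"
    by (rule rad_deriv[OF assms(1)])
  have "t islimpt {..0}"
    using islimpt_subset[of t "{t - 1..t}" "{..0}"] assms(1) by auto
  then show "at t within {..0} \<noteq> bot"
    using trivial_limit_within[of t "{..0}"] by (simp add: trivial_limit_def)
qed

lemma inverse_rad_deriv:
  assumes "t \<le> 0"
  shows "((\<lambda>s. 1 / rad s) has_real_derivative - xv t / rad t ^ 3) (at t within {..0})"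
  using rad_deriv[OF assms] rad_pos[OF assms]
  by (auto intro!: derivative_eq_intros simp: field_simps power3_eq_cube power2_eq_square)

lemma xv_deriv:
  assumes "t \<le> 0"
  shows "(xv has_real_derivative vv t - D (x t) * xv t - 1 / rad t) (at t within {..0})"
proof -
  have "x t \<bullet> x t / rad t ^ 3 = 1 / rad t"
    using rad_pos[OF assms] by (simp add: rad_sq[symmetric] power3_eq_cube power2_eq_square)
  then show ?thesis
    unfolding xv_def[abs_def]
    by (intro DERIV_cong[OF has_real_derivative_inner[OF x_deriv[OF assms] v_deriv[OF assms]]])
      (simp add: xv_def vv_def inner_diff_right)
qed

lemma vv_deriv:
  assumes "t \<le> 0"
  shows "(vv has_real_derivative - 2 * D (x t) * vv t - 2 * xv t / rad t ^ 3) (at t within {..0})"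
  unfolding vv_def[abs_def]
  by (rule DERIV_cong[OF has_real_derivative_inner[OF v_deriv[OF assms] v_deriv[OF assms]]])
    (simp add: xv_def vv_def inner_diff_right inner_diff_left inner_commute algebra_simps)

lemma energy_deriv:
  assumes "t \<le> 0"
  shows "(energy has_real_derivative - D (x t) * vv t) (at t within {..0})"
  unfolding energy_def[abs_def]
  by (rule DERIV_cong[OF DERIV_diff[OF DERIV_cdivide[OF vv_deriv[OF assms]] inverse_rad_deriv[OF assms]]])
    (simp add: field_simps)

lemma ang_sq_deriv:
  assumes "t \<le> 0"
  shows "(ang_sq has_real_derivative - 2 * D (x t) * ang_sq t) (at t within {..0})"
  unfolding ang_sq_def[abs_def] power2_eq_square[of "xv _"]
  by (rule DERIV_cong[OF DERIV_diff[OF DERIV_mult[OF rad_sq_deriv[OF assms] vv_deriv[OF assms]]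
        DERIV_mult[OF xv_deriv[OF assms] xv_deriv[OF assms]]]])
    (use rad_pos[OF assms] in \<open>simp add: ang_sq_def field_simps power2_eq_square power3_eq_cube\<close>)

lemma continuous_on_xv: "q \<le> 0 \<Longrightarrow> continuous_on {p..q} xv"
  by (rule has_real_derivative_within_imp_continuous_on[of p q "{..0}" xv
        "\<lambda>t. vv t - D (x t) * xv t - 1 / rad t"]) (auto intro: xv_deriv)

lemma continuous_on_rad: "q \<le> 0 \<Longrightarrow> continuous_on {p..q} rad"
  by (rule has_real_derivative_within_imp_continuous_on[of p q "{..0}" rad "\<lambda>t. xv t / rad t"])
    (auto intro: rad_deriv)

lemma energy_ge_energy_0:
  assumes "t \<le> 0"
  shows "energy 0 \<le> energy t"
proof (rule has_real_derivative_nonpos_imp_ge[OF assms])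
  show "(energy has_real_derivative - D (x s) * vv s) (at s within {..0})" if "s \<in> {t..0}" for s
    using that by (intro energy_deriv) simp
  show "- D (x s) * vv s \<le> 0" if "s \<in> {t<..<0}" for s
    using that D_nonneg[OF x_nonzero, of s] by (simp add: vv_def)
qed simp

lemma xv_sq_decreasing_inside_ball:
  assumes "a \<le> b" "b \<le> 0" "0 < R" "rad a = R" "rad b = R"
    and inside: "\<And>s. s \<in> {a..b} \<Longrightarrow> rad s \<le> R"
  shows "xv b ^ 2 \<le> xv a ^ 2"
proof -
  \<comment> \<open>Energy corrected by the centrifugal term at radius R: a Lyapunov function inside the ball.\<close>
  define W where "W s = 2 * energy s - ang_sq s / R ^ 2" for s
  have W_at_R: "W s = xv s ^ 2 / R ^ 2 - 2 / R" if "rad s = R" for s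
    using that assms(3) by (simp add: W_def energy_def ang_sq_def field_simps)
  have "W b \<le> W a"
  proof (rule has_real_derivative_nonpos_imp_ge[OF assms(1)])
    show "{a..b} \<subseteq> {..0}"
      using assms(2) by auto
    show "(W has_real_derivative - 2 * D (x s) * (vv s - ang_sq s / R ^ 2)) (at s within {..0})"
      if "s \<in> {a..b}" for s
      unfolding W_def[abs_def]
      using that assms(2)
      by (intro DERIV_cong[OF DERIV_diff[OF DERIV_cmult[OF energy_deriv] DERIV_cdivide[OF ang_sq_deriv]]])
        (auto simp: algebra_simps)
    show "- 2 * D (x s) * (vv s - ang_sq s / R ^ 2) \<le> 0" if "s \<in> {a<..<b}" for s
    proof -
      have s: "s \<in> {a..b}" "s \<le> 0"
        using that assms(2) by auto
      have "ang_sq s \<le> rad s ^ 2 * vv s"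
        by (simp add: ang_sq_def)
      also have "\<dots> \<le> R ^ 2 * vv s"
        using inside[OF s(1)] rad_pos[OF s(2)] by (intro mult_right_mono power_mono) (auto simp: vv_def)
      finally have "ang_sq s / R ^ 2 \<le> vv s"
        using assms(3) by (simp add: divide_le_eq mult.commute)
      then show ?thesis
        using D_nonneg[OF x_nonzero[OF s(2)]] by (simp add: mult_nonneg_nonneg)
    qed
  qed
  then show ?thesis
    using assms(3-5) by (simp add: W_at_R divide_le_cancel)
qed

end

section \<open>Solutions leaving a sphere fast\<close>

(* As xv = rad * rad', the assumption xv_0 says that the radial velocity at time 0 is V. *)
locale fast_outgoing = damped_kepler_past +
  fixes rs V :: real
  assumes rs_pos: "0 < rs" and rad_0: "rad 0 = rs" and xv_0: "xv 0 = rs * V"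
    and V_ge_rs: "8 * rs \<le> V" and V_ge_B: "4 * B * rs * exp B \<le> V"
    and V_sq_ge: "4 / rs \<le> V ^ 2"
begin

lemma V_pos: "0 < V"
  using rs_pos V_ge_rs by linarith

lemma neg_one_le_turn_bound: "-1 \<le> - 8 * rs / V"
  using V_ge_rs V_pos by (simp add: field_simps)

lemma xv_0_pos: "0 < xv 0"
  using rs_pos V_pos by (simp add: xv_0)

lemma vv_0_ge: "V ^ 2 \<le> vv 0"
proof -
  have "(rs * V) ^ 2 \<le> rs ^ 2 * vv 0"
    using Cauchy_Schwarz_ineq[of "x 0" "v 0"] rad_sq[of 0]
    by (simp add: xv_0[symmetric] xv_def vv_def rad_0)
  then show ?thesis
    using rs_pos by (simp add: power_mult_distrib)
qed

lemma vv_minus_inverse_rad_gt: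
  assumes "t \<le> 0"
  shows "V ^ 2 / 2 < vv t - 1 / rad t"
proof -
  have "4 * (1 / rs) \<le> V ^ 2"
    using V_sq_ge by simp
  then have "V ^ 2 / 4 \<le> vv 0 / 2 - 1 / rs"
    using vv_0_ge by linarith
  also have "\<dots> = energy 0"
    by (simp add: energy_def rad_0)
  also have "\<dots> \<le> energy t"
    by (rule energy_ge_energy_0[OF assms])
  finally have "V ^ 2 / 4 \<le> vv t / 2 - 1 / rad t"
    by (simp add: energy_def)
  moreover have "0 < 1 / rad t"
    using rad_pos[OF assms] by simp
  ultimately show ?thesis
    by linarith
qed

lemma xv_pos_after:
  assumes "s < t" "t < 0" "0 \<le> xv s"
  shows "0 < xv t"
proof (rule zeros_upcrossing_imp_pos[of s t xv "\<lambda>u. vv u - D (x u) * xv u - 1 / rad u"])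
  show "(xv has_real_derivative vv u - D (x u) * xv u - 1 / rad u) (at u)" if "u \<in> {s..t}" for u
    using that assms
    by (intro has_real_derivative_within_interval_imp_at[of "s - 1" 0 "{..0}"] xv_deriv) auto
  show "0 < vv u - D (x u) * xv u - 1 / rad u" if "u \<in> {s..t}" "xv u = 0" for u
  proof -
    have "V ^ 2 / 2 < vv u - 1 / rad u" "0 \<le> V ^ 2"
      using vv_minus_inverse_rad_gt[of u] that assms by auto
    moreover have "D (x u) * xv u = 0"
      using that(2) by simp
    ultimately show ?thesis
      by linarith
  qed
qed (use assms in auto)

lemma xv_le_while_nonneg:
  assumes "-1 \<le> t" "t \<le> 0" and nonneg: "\<And>s. s \<in> {t..0} \<Longrightarrow> 0 \<le> xv s"
  shows "xv t \<le> rs * V * exp B"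
proof -
  have "xv t * exp (B * t) \<le> xv 0 * exp (B * 0)"
  proof (rule has_real_derivative_nonneg_imp_le[of t 0 "{..0}" "\<lambda>s. xv s * exp (B * s)"])
    show "((\<lambda>s. xv s * exp (B * s)) has_real_derivative
        (vv s - D (x s) * xv s - 1 / rad s + B * xv s) * exp (B * s)) (at s within {..0})"
      if "s \<in> {t..0}" for s
      using that
      by (intro DERIV_cong[OF DERIV_mult[OF xv_deriv DERIV_chain2[OF DERIV_exp DERIV_cmult[OF DERIV_ident]]]])
        (auto simp: algebra_simps)
    show "0 \<le> (vv s - D (x s) * xv s - 1 / rad s + B * xv s) * exp (B * s)"
      if "s \<in> {t<..<0}" for s
    proof -
      have "0 \<le> (B - D (x s)) * xv s"
        using D_le[OF x_nonzero, of s] nonneg[of s] that by simp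
      moreover have "V ^ 2 / 2 < vv s - 1 / rad s" "0 \<le> V ^ 2"
        using vv_minus_inverse_rad_gt[of s] that by auto
      moreover have "(B - D (x s)) * xv s = B * xv s - D (x s) * xv s"
        by (rule left_diff_distrib)
      ultimately have "0 \<le> vv s - D (x s) * xv s - 1 / rad s + B * xv s"
        by linarith
      then show ?thesis
        by simp
    qed
  qed (use assms in auto)
  then have decay: "xv t * exp (B * t) \<le> rs * V"
    by (simp add: xv_0)
  have "xv t = xv t * exp (B * t) * exp (- (B * t))"
    by (simp add: mult.assoc exp_minus_inverse)
  also have "\<dots> \<le> rs * V * exp (- (B * t))"
    using decay by (rule mult_right_mono) simp
  also have "\<dots> \<le> rs * V * exp B"
  proof -
    have "- (B * t) \<le> B"
      using mult_left_mono[of "- t" 1 B] assms(1) B_nonneg by simp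
    then show ?thesis
      using rs_pos V_pos by simp
  qed
  finally show ?thesis .
qed

lemma xv_neg_somewhere: "\<exists>t. - 8 * rs / V \<le> t \<and> t \<le> 0 \<and> xv t < 0"
proof (rule ccontr)
  define a where "a = - 8 * rs / V"
  assume "\<not> ?thesis"
  then have nonneg: "0 \<le> xv s" if "s \<in> {a..0}" for s
    using that by (force simp: a_def)
  have a: "-1 \<le> a" "a < 0"
    using neg_one_le_turn_bound rs_pos V_pos by (auto simp: a_def)
  \<comment> \<open>By the Gronwall bound, xv' \<ge> V^2/4 on [a, 0], which drives xv a below - rs V.\<close>
  have "xv a - V ^ 2 / 4 * a \<le> xv 0 - V ^ 2 / 4 * 0"
  proof (rule has_real_derivative_nonneg_imp_le[of a 0 "{..0}" "\<lambda>s. xv s - V ^ 2 / 4 * s"])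
    show "((\<lambda>s. xv s - V ^ 2 / 4 * s) has_real_derivative
        vv s - D (x s) * xv s - 1 / rad s - V ^ 2 / 4 * 1) (at s within {..0})"
      if "s \<in> {a..0}" for s
      using that by (intro DERIV_diff xv_deriv DERIV_cmult DERIV_ident) auto
    show "0 \<le> vv s - D (x s) * xv s - 1 / rad s - V ^ 2 / 4 * 1" if "s \<in> {a<..<0}" for s
    proof -
      have "D (x s) * xv s \<le> B * (rs * V * exp B)"
        using that a D_nonneg[OF x_nonzero] D_le[OF x_nonzero] nonneg B_nonneg
        by (intro mult_mono xv_le_while_nonneg) auto
      also have "\<dots> \<le> V ^ 2 / 4"
        using mult_right_mono[OF V_ge_B, of V] V_pos by (simp add: power2_eq_square algebra_simps)
      finally show ?thesis
        using vv_minus_inverse_rad_gt[of s] that by simp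
    qed
  qed (use a in auto)
  moreover have "V ^ 2 / 4 * a = - 2 * (rs * V)"
    using V_pos by (simp add: a_def power2_eq_square)
  ultimately have "xv a \<le> - (rs * V)"
    by (simp add: xv_0 mult.commute)
  then have "xv a < 0"
    using xv_0 xv_0_pos by linarith
  then show False
    using nonneg[of a] a by simp
qed

definition turn :: real where "turn = (THE T. T < 0 \<and> xv T = 0)"

lemma xv_zero_unique:
  assumes "T < 0" "xv T = 0" "T' < 0" "xv T' = 0"
  shows "T = T'"
  using xv_pos_after[of T T'] xv_pos_after[of T' T] assms
  by (cases T T' rule: linorder_cases) auto

lemma turn_spec: "- 8 * rs / V \<le> turn" "turn < 0" "xv turn = 0"
proof -
  obtain t where t: "- 8 * rs / V \<le> t" "t \<le> 0" "xv t < 0"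
    using xv_neg_somewhere by blast
  then obtain T where T: "t \<le> T" "T \<le> 0" "xv T = 0"
    using IVT'[of xv t 0 0] continuous_on_xv[of 0 t] xv_0_pos by auto
  moreover have "T \<noteq> 0"
    using T xv_0_pos by auto
  ultimately have "turn = T"
    unfolding turn_def using xv_zero_unique by (intro the_equality) auto
  then show "- 8 * rs / V \<le> turn" "turn < 0" "xv turn = 0"
    using T t \<open>T \<noteq> 0\<close> by auto
qed

lemma xv_pos_after_turn: "turn < t \<Longrightarrow> t \<le> 0 \<Longrightarrow> 0 < xv t"
  using xv_pos_after[of turn t] turn_spec xv_0_pos by (cases "t = 0") auto

lemma xv_neg_before_turn: "t < turn \<Longrightarrow> xv t < 0"
  using xv_pos_after[of t turn] turn_spec by force

lemma rad_decreasing_before_turn: "s < t \<Longrightarrow> t \<le> turn \<Longrightarrow> rad t < rad s"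
  using turn_spec(2) xv_neg_before_turn rad_pos
  by (intro has_real_derivative_neg_imp_less[of s t "{..0}" rad "\<lambda>u. xv u / rad u"] rad_deriv)
    (auto intro: divide_neg_pos)

lemma rad_increasing_after_turn: "turn \<le> s \<Longrightarrow> s < t \<Longrightarrow> t \<le> 0 \<Longrightarrow> rad s < rad t"
  using xv_pos_after_turn rad_pos
  by (intro has_real_derivative_pos_imp_less[of s t "{..0}" rad "\<lambda>u. xv u / rad u"] rad_deriv)
    auto

lemma rad_turn_less: "rad turn < rs"
  using rad_increasing_after_turn[of turn 0] turn_spec(2) rad_0 by simp

lemma rad_sq_turn_ge: "rs ^ 2 - 16 * rs ^ 2 * exp B \<le> rad turn ^ 2"
proof -
  define M where "M = rs * V * exp B"
  have "rad 0 ^ 2 - 2 * M * 0 \<le> rad turn ^ 2 - 2 * M * turn"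
  proof (rule has_real_derivative_nonpos_imp_ge[of turn 0 "{..0}" "\<lambda>s. rad s ^ 2 - 2 * M * s"])
    show "((\<lambda>s. rad s ^ 2 - 2 * M * s) has_real_derivative 2 * xv s - 2 * M * 1) (at s within {..0})"
      if "s \<in> {turn..0}" for s
      using that by (intro DERIV_diff rad_sq_deriv DERIV_cmult DERIV_ident) auto
    show "2 * xv s - 2 * M * 1 \<le> 0" if "s \<in> {turn<..<0}" for s
    proof -
      have "-1 \<le> turn"
        using neg_one_le_turn_bound turn_spec(1) by linarith
      moreover have "0 \<le> xv u" if "u \<in> {s..0}" for u
        using xv_pos_after_turn[of u] that \<open>s \<in> {turn<..<0}\<close> by simp
      ultimately have "xv s \<le> M"
        unfolding M_def using that by (intro xv_le_while_nonneg) auto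
      then show ?thesis
        by simp
    qed
  qed (use turn_spec in auto)
  moreover have "M * (- 8 * rs / V) \<le> M * turn"
    using turn_spec(1) rs_pos V_pos by (intro mult_left_mono) (auto simp: M_def)
  moreover have "M * (- 8 * rs / V) = - 8 * rs ^ 2 * exp B"
    using V_pos by (simp add: M_def power2_eq_square)
  ultimately show ?thesis
    using rad_0 by simp
qed

lemma xv_le_before_turn:
  assumes "t \<le> turn"
  shows "xv t \<le> - (V ^ 2 / 2 * (turn - t))"
proof -
  have "xv t - V ^ 2 / 2 * t \<le> xv turn - V ^ 2 / 2 * turn"
  proof (rule has_real_derivative_nonneg_imp_le[of t turn "{..0}" "\<lambda>s. xv s - V ^ 2 / 2 * s"])
    show "((\<lambda>s. xv s - V ^ 2 / 2 * s) has_real_derivative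
        vv s - D (x s) * xv s - 1 / rad s - V ^ 2 / 2 * 1) (at s within {..0})"
      if "s \<in> {t..turn}" for s
      using that turn_spec(2) by (intro DERIV_diff xv_deriv DERIV_cmult DERIV_ident) auto
    show "0 \<le> vv s - D (x s) * xv s - 1 / rad s - V ^ 2 / 2 * 1" if "s \<in> {t<..<turn}" for s
    proof -
      have "D (x s) * xv s \<le> 0"
        using that turn_spec(2) D_nonneg[OF x_nonzero, of s] xv_neg_before_turn[of s]
        by (simp add: mult_nonneg_nonpos)
      then show ?thesis
        using vv_minus_inverse_rad_gt[of s] that turn_spec(2) by simp
    qed
  qed (use assms turn_spec in auto)
  moreover have "V ^ 2 / 2 * (turn - t) = V ^ 2 / 2 * turn - V ^ 2 / 2 * t"
    by (rule right_diff_distrib)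
  ultimately show ?thesis
    using turn_spec(3) by linarith
qed

lemma rad_sq_before_turn:
  assumes "t \<le> turn"
  shows "rad turn ^ 2 + V ^ 2 / 2 * (turn - t) ^ 2 \<le> rad t ^ 2"
proof -
  have "rad turn ^ 2 - V ^ 2 / 2 * (turn - turn) ^ 2 \<le> rad t ^ 2 - V ^ 2 / 2 * (turn - t) ^ 2"
  proof (rule has_real_derivative_nonpos_imp_ge[of t turn "{..0}"
        "\<lambda>s. rad s ^ 2 - V ^ 2 / 2 * (turn - s) ^ 2"])
    show "((\<lambda>s. rad s ^ 2 - V ^ 2 / 2 * (turn - s) ^ 2) has_real_derivative
        2 * xv s + V ^ 2 * (turn - s)) (at s within {..0})"
      if "s \<in> {t..turn}" for s
      using that turn_spec(2)
      by (intro DERIV_cong[OF DERIV_diff[OF rad_sq_deriv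
            DERIV_cmult[OF DERIV_power[OF DERIV_diff[OF DERIV_const DERIV_ident]]]]])
        (auto simp: algebra_simps)
    show "2 * xv s + V ^ 2 * (turn - s) \<le> 0" if "s \<in> {t<..<turn}" for s
      using xv_le_before_turn[of s] that by simp
  qed (use assms turn_spec in auto)
  then show ?thesis
    by simp
qed

(* The delay 6 rs e^B / V makes the quadratic gain of rad_sq_before_turn, 18 rs^2 e^(2B),
  exceed the loss 16 rs^2 e^B of rad_sq_turn_ge. *)
lemma rs_less_rad_before_turn: "rs < rad (turn - 6 * rs * exp B / V)"
proof -
  define t where "t = turn - 6 * rs * exp B / V"
  have t_turn: "t < turn"
    using rs_pos V_pos by (simp add: t_def)
  have "turn - t = 6 * rs * exp B / V"
    by (simp add: t_def)
  then have "V ^ 2 / 2 * (turn - t) ^ 2 = V ^ 2 / 2 * (6 * rs * exp B / V) ^ 2"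
    by simp
  also have "\<dots> = 18 * rs ^ 2 * (exp B * exp B)"
    using V_pos by (simp add: field_simps power2_eq_square)
  finally have "V ^ 2 / 2 * (turn - t) ^ 2 = 18 * rs ^ 2 * (exp B * exp B)" .
  moreover have "rs ^ 2 * exp B \<le> rs ^ 2 * (exp B * exp B)"
    using B_nonneg by (intro mult_left_mono) auto
  moreover have "0 < rs ^ 2 * exp B"
    using rs_pos by simp
  ultimately have "rs ^ 2 < rad t ^ 2"
    using rad_sq_before_turn[of t] rad_sq_turn_ge t_turn by linarith
  moreover have "0 < rad t"
    using rad_pos[of t] t_turn turn_spec(2) by simp
  ultimately show ?thesis
    unfolding t_def[symmetric] using power_less_imp_less_base[of rs 2 "rad t"] by simp
qed

definition reentry :: real where "reentry = (THE tau. tau < turn \<and> rad tau = rs)"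

lemma reentry_spec: "turn - 6 * rs * exp B / V \<le> reentry" "reentry < turn" "rad reentry = rs"
proof -
  define t where "t = turn - 6 * rs * exp B / V"
  have "t \<le> turn"
    using rs_pos V_pos by (simp add: t_def)
  moreover have "rs \<le> rad t"
    using rs_less_rad_before_turn by (simp add: t_def)
  moreover have "continuous_on {t..turn} rad"
    using turn_spec(2) by (intro continuous_on_rad) simp
  ultimately obtain tau where tau: "t \<le> tau" "tau \<le> turn" "rad tau = rs"
    using IVT2'[of rad turn rs t] less_imp_le[OF rad_turn_less] by blast
  have tau_turn: "tau < turn"
    using tau rad_turn_less by (cases "tau = turn") auto
  have unique: "tau' = tau" if "tau' < turn" "rad tau' = rs" for tau'
  proof (rule ccontr)
    assume "tau' \<noteq> tau"
    then consider "tau' < tau" | "tau < tau'"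
      by linarith
    then show False
    proof cases
      case 1
      then show False
        using rad_decreasing_before_turn[of tau' tau] tau(3) that(2) tau_turn by simp
    next
      case 2
      then show False
        using rad_decreasing_before_turn[of tau tau'] tau(3) that by simp
    qed
  qed
  have "reentry = tau"
    unfolding reentry_def
  proof (rule the_equality)
    show "tau < turn \<and> rad tau = rs"
      using tau_turn tau(3) by simp
  qed (use unique in blast)
  then show "turn - 6 * rs * exp B / V \<le> reentry" "reentry < turn" "rad reentry = rs"
    using tau(1,3) tau_turn unfolding t_def by simp_all
qed

lemma rad_le_after_reentry:
  assumes "reentry \<le> s" "s \<le> 0"
  shows "rad s \<le> rs"
proof (cases "s \<le> turn")
  case True
  then show ?thesis
    using rad_decreasing_before_turn[of reentry s] assms(1) reentry_spec(3)
    by (cases "s = reentry") auto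
next
  case False
  then show ?thesis
    using rad_increasing_after_turn[of s 0] assms(2) rad_0 by (cases "s = 0") auto
qed

lemma xv_reentry_le: "xv reentry \<le> - (rs * V)"
proof -
  have "xv 0 ^ 2 \<le> xv reentry ^ 2"
    using reentry_spec turn_spec(2) rs_pos rad_0 rad_le_after_reentry
    by (intro xv_sq_decreasing_inside_ball) auto
  then have "(rs * V) ^ 2 \<le> (- xv reentry) ^ 2"
    by (simp add: xv_0)
  moreover have "0 \<le> - xv reentry"
    using xv_neg_before_turn[OF reentry_spec(2)] by simp
  ultimately show ?thesis
    using power2_le_imp_le[of "rs * V" "- xv reentry"] by linarith
qed

lemma turn_bounds: "- 8 * rs / V \<le> turn \<and> turn \<le> 0"
  using turn_spec(1,2) by simp

lemma reentry_bounds: "(- 8 * rs - 6 * rs * exp B) / V \<le> reentry \<and> reentry \<le> 0"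
  using reentry_spec(1,2) turn_spec(1,2) diff_divide_distrib[of "- 8 * rs" "6 * rs * exp B" V] by linarith

lemma turn_and_reentry:
  assumes rd: "\<And>t. t \<le> 0 \<Longrightarrow> ((\<lambda>s. norm (x s)) has_real_derivative rd t) (at t within {..0})"
  shows "turn < 0 \<and> rd turn = 0 \<and> (\<forall>t. turn < t \<and> t < 0 \<longrightarrow> rd t > 0) \<and>
    (\<forall>t. t < turn \<longrightarrow> rd t < 0) \<and> reentry < turn \<and> norm (x reentry) = rs"
proof -
  have rd_eq: "rd t = xv t / rad t" if "t \<le> 0" for t
    using radial_velocity_eq[OF that rd[OF that]] .
  have "rd turn = 0"
    using rd_eq[of turn] turn_spec by simp
  moreover have "0 < rd t" if "turn < t" "t < 0" for t
    using rd_eq[of t] xv_pos_after_turn[of t] rad_pos[of t] that by simp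
  moreover have "rd t < 0" if "t < turn" for t
    using rd_eq[of t] xv_neg_before_turn[OF that] rad_pos[of t] that turn_spec(2)
    by (simp add: divide_neg_pos)
  moreover have "norm (x reentry) = rs"
    using reentry_spec(3) by (simp add: rad_def)
  ultimately show ?thesis
    using turn_spec(2) reentry_spec(2) by blast
qed

lemma rd_reentry_le:
  assumes rd: "\<And>t. t \<le> 0 \<Longrightarrow> ((\<lambda>s. norm (x s)) has_real_derivative rd t) (at t within {..0})"
  shows "rd reentry \<le> - V"
proof -
  have "rd reentry = xv reentry / rs"
    using radial_velocity_eq[OF _ rd] reentry_spec turn_spec(2) by simp
  also have "\<dots> \<le> - (rs * V) / rs"
    using xv_reentry_le by (rule divide_right_mono) (use rs_pos in simp)
  finally show ?thesis
    using rs_pos by simp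
qed

end

section \<open>Sequences of solutions\<close>

lemma eventually_fast_outgoing:
  assumes kepler: "\<And>n. damped_kepler_past D B (x n) (v n)"
    and rd: "\<And>n t. t \<le> 0 \<Longrightarrow> ((\<lambda>s. norm (x n s)) has_real_derivative rd n t) (at t within {..0})"
    and "0 < rs" and r0: "\<And>n. norm (x n 0) = rs"
    and rd0: "filterlim (\<lambda>n. rd n 0) at_top sequentially"
  shows "\<forall>\<^sub>F n in sequentially. fast_outgoing D B (x n) (v n) rs (rd n 0)"
proof -
  have "\<forall>\<^sub>F n in sequentially. max (8 * rs) (4 * B * rs * exp B) \<le> rd n 0"
    using rd0 unfolding filterlim_at_top by (rule spec)
  moreover have "\<forall>\<^sub>F n in sequentially. 4 / rs \<le> rd n 0 ^ 2"
    using filterlim_pow_at_top[OF pos2 rd0] unfolding filterlim_at_top by (rule spec)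
  ultimately show ?thesis
  proof eventually_elim
    case (elim n)
    interpret damped_kepler_past D B "x n" "v n"
      by (rule kepler)
    have "rad 0 = rs"
      using r0 by (simp add: rad_def)
    moreover have "xv 0 = rs * rd n 0"
      using radial_velocity_eq[OF order_refl rd[OF order_refl]] calculation \<open>0 < rs\<close> by simp
    ultimately show ?case
      using elim \<open>0 < rs\<close> by unfold_locales auto
  qed
qed

lemma tendsto_zero_if_between_const_divide_and_zero:
  fixes f g :: "'a \<Rightarrow> real"
  assumes "filterlim f at_top F" "\<forall>\<^sub>F n in F. c / f n \<le> g n \<and> g n \<le> 0"
  shows "(g \<longlongrightarrow> 0) F"
proof (rule tendsto_sandwich)
  show "((\<lambda>n. c / f n) \<longlongrightarrow> 0) F"
    by (rule tendsto_divide_0[OF tendsto_const filterlim_at_top_imp_at_infinity[OF assms(1)]])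
qed (use assms(2) in \<open>auto elim: eventually_mono\<close>)

theorem lemma7p2:
  fixes D :: "real^2 \<Rightarrow> real"
    and x v :: "nat \<Rightarrow> real \<Rightarrow> real^2"
    and rd :: "nat \<Rightarrow> real \<Rightarrow> real"
    and rstar :: real
  assumes D_nonneg: "\<And>y. y \<noteq> 0 \<Longrightarrow> D y \<ge> 0"
    and D_bounded: "\<exists>B. \<forall>y. y \<noteq> 0 \<longrightarrow> D y \<le> B"
    and D_C1: "C1_punctured D"
    and sol: "\<And>n. past_solution D (x n) (v n)"
    and nonrect: "\<And>n. nonrectilinear (x n) (v n)"
    and rd_def: "\<And>n t. t \<le> 0 \<Longrightarrow>
        ((\<lambda>s. norm (x n s)) has_real_derivative rd n t) (at t within {..0})"
    and rstar_pos: "rstar > 0"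
    and r0: "\<And>n. norm (x n 0) = rstar"
    and rd0: "filterlim (\<lambda>n. rd n 0) at_top sequentially"
  shows "\<exists>T tau :: nat \<Rightarrow> real.
     (\<forall>\<^sub>F n in sequentially.
        T n < 0 \<and> rd n (T n) = 0 \<and>
        (\<forall>t. T n < t \<and> t < 0 \<longrightarrow> rd n t > 0) \<and>
        (\<forall>t. t < T n \<longrightarrow> rd n t < 0) \<and>
        tau n < T n \<and> norm (x n (tau n)) = rstar) \<and>
     T \<longlonglongrightarrow> 0 \<and> tau \<longlonglongrightarrow> 0 \<and>
     filterlim (\<lambda>n. rd n (tau n)) at_bot sequentially"
proof -
  obtain B where "\<And>y. y \<noteq> 0 \<Longrightarrow> D y \<le> B"
    using D_bounded by blast
  then have "\<And>n. damped_kepler_past D B (x n) (v n)"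
    using D_nonneg sol by unfold_locales
  then have outgoing: "\<forall>\<^sub>F n in sequentially. fast_outgoing D B (x n) (v n) rstar (rd n 0)"
    using rd_def rstar_pos r0 rd0 by (rule eventually_fast_outgoing)
  define T where "T n = fast_outgoing.turn (x n) (v n)" for n
  define tau where "tau n = fast_outgoing.reentry (x n) (v n) rstar" for n
  show ?thesis
  proof (rule exI[of _ T], rule exI[of _ tau], intro conjI)
    show "T \<longlonglongrightarrow> 0"
      unfolding T_def using eventually_mono[OF outgoing fast_outgoing.turn_bounds]
      by (rule tendsto_zero_if_between_const_divide_and_zero[OF rd0])
    show "tau \<longlonglongrightarrow> 0"
      unfolding tau_def using eventually_mono[OF outgoing fast_outgoing.reentry_bounds]
      by (rule tendsto_zero_if_between_const_divide_and_zero[OF rd0])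
    have "\<forall>\<^sub>F n in sequentially. rd n 0 \<le> - rd n (tau n)"
      using outgoing unfolding tau_def
      by (rule eventually_mono) (use fast_outgoing.rd_reentry_le[OF _ rd_def] in force)
    then show "filterlim (\<lambda>n. rd n (tau n)) at_bot sequentially"
      unfolding filterlim_uminus_at_bot by (rule filterlim_at_top_mono[OF rd0])
  qed (unfold T_def tau_def, rule eventually_mono[OF outgoing],
      rule fast_outgoing.turn_and_reentry[OF _ rd_def])
qed

end
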